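(* Let $Q=(G\leftleftarrows A)$ be a group-like graph and let $X\subseteq A$ be the set of arrows with source $1\in G$. Then product $n$-cubes of $Q$ are in one-to-one correspondence with $(n+1)$-tuples $(g,x_1,\dots,x_n)$ with $g\in G$ and $x_1,\dots,x_n\in X$; explicitly, every product $n$-cube can be written uniquely as $(g\cdot x_1)\,\square\,x_2\,\square\cdots\square\,x_n$, where $g\cdot x_1$ denotes the left action of $g$ on the arrow $x_1$ via $\mu$.
   Context: Graphs are directed graphs $(V\overset{s}{\underset{t}{\leftleftarrows}}A)$, possibly with loops and multiple edges; the Cartesian product $Q_1\,\square\,Q_2$ has vertex set $V_1\times V_2$, arrows $A_1\times V_2\sqcup V_1\times A_2$, source $s_1\times\mathrm{id}\sqcup\mathrm{id}\times s_2$, target $t_1\times\mathrm{id}\sqcup\mathrm{id}\times t_2$. A multiplicative graph is a graph $Q$ with a morphism $\mu:Q\,\square\,Q\to Q$ with $\mu\circ(\mu\,\square\,\mathrm{id})=\mu\circ(\mathrm{id}\,\square\,\mu)$; it is group-like if the semigroup of vertices is a group $G$. The multiplication gives a two-sided action of $G$ on the arrows: $g\cdot a=\mu(g,a)$, $a\cdot g=\mu(a,g)$. Let $\mathrm{Q}_1$ be the graph with two vertices and one arrow, $\mathrm{Q}_n=\mathrm{Q}_1^{\square n}$. An $n$-cube of $Q$ is a morphism $\mathrm{Q}_n\to Q$; for arrows $a_1,\dots,a_n$, the product $n$-cube $a_1\,\square\cdots\square\,a_n$ is the composite $\mathrm{Q}_n\xrightarrow{a_1\square\cdots\square a_n}Q^{\square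 n}\xrightarrow{\mu_n}Q$, where $a_i:\mathrm{Q}_1\to Q$ is the morphism determined by $a_i$ and $\mu_n$ is the iterated multiplication.
   Formalization: The unit 1 of G also acts trivially on arrows from both sides, $\mu(1,a)=a$ and $\mu(a,1)=a$ for every arrow a, so $g\cdot a$ and $a\cdot g$ form a genuine two-sided action. The paper assumes this as well. *)

theory Defs
  imports "HOL-Algebra.Group"
begin

text \<open>A multiplication \<mu> : Q \<box> Q \<rightarrow> Q is given by its three components:
  mv on V \<times> V (vertices of Q \<box> Q), mr on A \<times> V and ml on V \<times> A (arrows of Q \<box> Q).\<close>

definition mult_graph ::
  "'v set \<Rightarrow> 'a set \<Rightarrow> ('a \<Rightarrow> 'v) \<Rightarrow> ('a \<Rightarrow> 'v) \<Rightarrow>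
   ('v \<Rightarrow> 'v \<Rightarrow> 'v) \<Rightarrow> ('v \<Rightarrow> 'a \<Rightarrow> 'a) \<Rightarrow> ('a \<Rightarrow> 'v \<Rightarrow> 'a) \<Rightarrow> bool" where
  "mult_graph V A s t mv ml mr \<longleftrightarrow>
     \<comment> \<open>Q is a graph\<close>
     (\<forall>a\<in>A. s a \<in> V \<and> t a \<in> V) \<and>
     \<comment> \<open>\<mu> is a graph morphism Q \<box> Q \<rightarrow> Q\<close>
     (\<forall>g\<in>V. \<forall>h\<in>V. mv g h \<in> V) \<and>
     (\<forall>g\<in>V. \<forall>a\<in>A. ml g a \<in> A \<and> s (ml g a) = mv g (s a) \<and> t (ml g a) = mv g (t a)) \<and>
     (\<forall>a\<in>A. \<forall>h\<in>V. mr a h \<in> A \<and> s (mr a h) = mv (s a) h \<and> t (mr a h) = mv (t a) h) \<and>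
     \<comment> \<open>associativity \<mu> \<circ> (\<mu> \<box> id) = \<mu> \<circ> (id \<box> \<mu>) on vertices and the three kinds of arrows\<close>
     (\<forall>g\<in>V. \<forall>h\<in>V. \<forall>k\<in>V. mv (mv g h) k = mv g (mv h k)) \<and>
     (\<forall>a\<in>A. \<forall>h\<in>V. \<forall>k\<in>V. mr (mr a h) k = mr a (mv h k)) \<and>
     (\<forall>g\<in>V. \<forall>a\<in>A. \<forall>k\<in>V. mr (ml g a) k = ml g (mr a k)) \<and>
     (\<forall>g\<in>V. \<forall>h\<in>V. \<forall>a\<in>A. ml (mv g h) a = ml g (ml h a))"

definition group_like ::
  "'v set \<Rightarrow> 'a set \<Rightarrow> ('a \<Rightarrow> 'v) \<Rightarrow> ('a \<Rightarrow> 'v) \<Rightarrow>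
   ('v \<Rightarrow> 'v \<Rightarrow> 'v) \<Rightarrow> ('v \<Rightarrow> 'a \<Rightarrow> 'a) \<Rightarrow> ('a \<Rightarrow> 'v \<Rightarrow> 'a) \<Rightarrow> 'v \<Rightarrow> bool" where
  "group_like V A s t mv ml mr e \<longleftrightarrow>
     mult_graph V A s t mv ml mr \<and>
     group \<lparr>carrier = V, monoid.mult = mv, one = e\<rparr>"

fun mu :: "('v \<Rightarrow> 'v \<Rightarrow> 'v) \<Rightarrow> ('v \<Rightarrow> 'a \<Rightarrow> 'a) \<Rightarrow> ('a \<Rightarrow> 'v \<Rightarrow> 'a) \<Rightarrow>
           'v + 'a \<Rightarrow> 'v + 'a \<Rightarrow> 'v + 'a" where
  "mu mv ml mr (Inl g) (Inl h) = Inl (mv g h)"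
| "mu mv ml mr (Inl g) (Inr a) = Inr (ml g a)"
| "mu mv ml mr (Inr a) (Inl h) = Inr (mr a h)"
| "mu mv ml mr (Inr a) (Inr b) = undefined"

text \<open>Iterated multiplication \<mu>_n : Q^{\<box>n} \<rightarrow> Q, \<mu>_1 = id, \<mu>_n = \<mu> \<circ> (\<mu>_{n-1} \<box> id);
  an element of Q^{\<box>n} is a list of n entries, vertices (Inl) except at most one arrow (Inr).\<close>
definition mu_n :: "('v \<Rightarrow> 'v \<Rightarrow> 'v) \<Rightarrow> ('v \<Rightarrow> 'a \<Rightarrow> 'a) \<Rightarrow> ('a \<Rightarrow> 'v \<Rightarrow> 'a) \<Rightarrow>
           ('v + 'a) list \<Rightarrow> 'v + 'a" where
  "mu_n mv ml mr ws = foldl (mu mv ml mr) (hd ws) (tl ws)"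

text \<open>The cube graph Q_n = Q_1^{\<box>n}: vertices are bool lists of length n;
  arrows are bool option lists of length n with exactly one entry None (the arrow
  of Q_1 in that coordinate); source replaces None by False, target by True.\<close>
definition cube_verts :: "nat \<Rightarrow> bool list set" where
  "cube_verts n = {\<epsilon>. length \<epsilon> = n}"

definition cube_arrows :: "nat \<Rightarrow> bool option list set" where
  "cube_arrows n = {e. length e = n \<and> (\<exists>!i. i < n \<and> e ! i = None)}"

text \<open>The product n-cube a_1 \<box> ... \<box> a_n : Q_n \<rightarrow> Q as a pair (vertex map, arrow map),
  restricted to Q_n (undefined outside), so that HOL equality is equality of morphisms.\<close>
definition prod_cube ::
  "('a \<Rightarrow> 'v) \<Rightarrow> ('a \<Rightarrow> 'v) \<Rightarrow> ('v \<Rightarrow> 'v \<Rightarrow> 'v) \<Rightarrow> ('v \<Rightarrow> 'a \<Rightarrow> 'a) \<Rightarrow> ('a \<Rightarrow> 'v \<Rightarrow> 'a) \<Rightarrow>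
   'a list \<Rightarrow> (bool list \<Rightarrow> 'v) \<times> (bool option list \<Rightarrow> 'a)" where
  "prod_cube s t mv ml mr as =
     ((\<lambda>\<epsilon>. if \<epsilon> \<in> cube_verts (length as)
           then projl (mu_n mv ml mr (map2 (\<lambda>b a. Inl (if b then t a else s a)) \<epsilon> as))
           else undefined),
      (\<lambda>e. if e \<in> cube_arrows (length as)
           then projr (mu_n mv ml mr
                  (map2 (\<lambda>oc a. case oc of None \<Rightarrow> Inr a | Some b \<Rightarrow> Inl (if b then t a else s a)) e as))
           else undefined))"

end

theory Submission
  imports Defs
begin

text \<open>
  Reading a product cube coordinate by coordinate shows that it depends on its factors only
  up to the moves \<open>a \<box> (h \<cdot> b) = (a \<cdot> h) \<box> b\<close> for vertices \<open>h\<close>. Pushing vertices to the left turns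
  every factor but the first into an arrow with source \<open>1\<close>, and writing the first one as
  \<open>g \<cdot> x\<^sub>1\<close> with \<open>g\<close> its source gives the normal form. Conversely, the normal form is
  recovered from the cube: the edge from \<open>(0,\<dots>,0)\<close> in direction 1 is \<open>g \<cdot> x\<^sub>1\<close>, whose source
  is \<open>g\<close>, and in a group-like graph left multiplication by a vertex can be cancelled, so the
  cube of the remaining factors is determined and induction applies.
\<close>

definition graph_elem :: "'v set \<Rightarrow> 'a set \<Rightarrow> 'v + 'a \<Rightarrow> bool" where
  "graph_elem V A p = (case p of Inl v \<Rightarrow> v \<in> V | Inr a \<Rightarrow> a \<in> A)"

text \<open>\<open>mu\<close> is \<open>undefined\<close> on two arrows, so iterated products are only meaningful on lists
  containing at most one arrow.\<close>
definition arrow_count :: "('v + 'a) list \<Rightarrow> nat" where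
  "arrow_count ws = length (filter (\<lambda>w. \<not> isl w) ws)"

locale multiplicative_graph =
  fixes V :: "'v set" and A :: "'a set" and s t :: "'a \<Rightarrow> 'v"
    and mv :: "'v \<Rightarrow> 'v \<Rightarrow> 'v" and ml :: "'v \<Rightarrow> 'a \<Rightarrow> 'a" and mr :: "'a \<Rightarrow> 'v \<Rightarrow> 'a"
  assumes mult_graph: "mult_graph V A s t mv ml mr"
begin

lemma
  shows source_in: "a \<in> A \<Longrightarrow> s a \<in> V"
    and target_in: "a \<in> A \<Longrightarrow> t a \<in> V"
    and mv_closed: "g \<in> V \<Longrightarrow> h \<in> V \<Longrightarrow> mv g h \<in> V"
    and ml_closed: "g \<in> V \<Longrightarrow> a \<in> A \<Longrightarrow> ml g a \<in> A"
    and mr_closed: "a \<in> A \<Longrightarrow> h \<in> V \<Longrightarrow> mr a h \<in> A"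
    and source_ml: "g \<in> V \<Longrightarrow> a \<in> A \<Longrightarrow> s (ml g a) = mv g (s a)"
    and target_ml: "g \<in> V \<Longrightarrow> a \<in> A \<Longrightarrow> t (ml g a) = mv g (t a)"
    and source_mr: "a \<in> A \<Longrightarrow> h \<in> V \<Longrightarrow> s (mr a h) = mv (s a) h"
    and target_mr: "a \<in> A \<Longrightarrow> h \<in> V \<Longrightarrow> t (mr a h) = mv (t a) h"
    and mv_assoc: "g \<in> V \<Longrightarrow> h \<in> V \<Longrightarrow> k \<in> V \<Longrightarrow> mv (mv g h) k = mv g (mv h k)"
    and mr_mr: "a \<in> A \<Longrightarrow> h \<in> V \<Longrightarrow> k \<in> V \<Longrightarrow> mr (mr a h) k = mr a (mv h k)"
    and mr_ml: "g \<in> V \<Longrightarrow> a \<in> A \<Longrightarrow> k \<in> V \<Longrightarrow> mr (ml g a) k = ml g (mr a k)"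
    and ml_mv: "g \<in> V \<Longrightarrow> h \<in> V \<Longrightarrow> a \<in> A \<Longrightarrow> ml (mv g h) a = ml g (ml h a)"
  using mult_graph unfolding mult_graph_def by blast+

abbreviation "in_graph \<equiv> graph_elem V A"
abbreviation "graph_mu \<equiv> mu mv ml mr"
abbreviation "graph_mu_n \<equiv> mu_n mv ml mr"

lemma in_graph_mu:
  assumes "in_graph p" "in_graph q" "isl p \<or> isl q"
  shows "in_graph (graph_mu p q) \<and> (isl (graph_mu p q) \<longleftrightarrow> isl p \<and> isl q)"
  using assms by (cases p; cases q) (auto simp: graph_elem_def mv_closed ml_closed mr_closed)

lemma mu_assoc:
  assumes "in_graph p" "in_graph q" "in_graph r" "arrow_count [p, q, r] \<le> 1"
  shows "graph_mu (graph_mu p q) r = graph_mu p (graph_mu q r)"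
  using assms by (cases p; cases q; cases r) (auto simp: graph_elem_def arrow_count_def mv_assoc mr_mr mr_ml ml_mv)

lemma in_graph_foldl_mu:
  assumes "in_graph z" "\<forall>w\<in>set ws. in_graph w" "arrow_count (z # ws) \<le> 1"
  shows "in_graph (foldl graph_mu z ws) \<and> (isl (foldl graph_mu z ws) \<longleftrightarrow> arrow_count (z # ws) = 0)"
  using assms
proof (induction ws arbitrary: z)
  case Nil
  then show ?case by (auto simp: arrow_count_def)
next
  case (Cons w ws)
  have "isl z \<or> isl w" using Cons.prems(3) by (auto simp: arrow_count_def split: if_splits)
  then have zw: "in_graph (graph_mu z w) \<and> (isl (graph_mu z w) \<longleftrightarrow> isl z \<and> isl w)"
    using in_graph_mu Cons.prems by auto
  have "arrow_count (graph_mu z w # ws) = arrow_count (z # w # ws)"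
    using zw \<open>isl z \<or> isl w\<close> by (auto simp: arrow_count_def)
  then show ?case using Cons.IH[of "graph_mu z w"] zw Cons.prems by auto
qed

text \<open>\<open>mu_n\<close> accumulates from the left; associativity, valid while at most one factor is an
  arrow, splits off the head factor instead.\<close>
lemma foldl_mu_Cons:
  assumes "in_graph z" "in_graph w" "\<forall>u\<in>set ws. in_graph u" "arrow_count (z # w # ws) \<le> 1"
  shows "foldl graph_mu z (w # ws) = graph_mu z (foldl graph_mu w ws)"
  using assms
proof (induction ws rule: rev_induct)
  case Nil
  then show ?case by simp
next
  case (snoc u ws)
  have count: "arrow_count (z # w # ws @ [u]) = arrow_count [z] + arrow_count (w # ws) + arrow_count [u]"
    by (simp add: arrow_count_def)
  have "arrow_count (z # w # ws) \<le> arrow_count (z # w # ws @ [u])" by (simp add: arrow_count_def)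
  then have "arrow_count (z # w # ws) \<le> 1" using snoc.prems(4) by linarith
  then have IH: "foldl graph_mu z (w # ws) = graph_mu z (foldl graph_mu w ws)" using snoc by auto
  have "arrow_count (w # ws) \<le> 1" using count snoc.prems(4) by linarith
  then have fold_w: "in_graph (foldl graph_mu w ws) \<and> (isl (foldl graph_mu w ws) \<longleftrightarrow> arrow_count (w # ws) = 0)"
    using in_graph_foldl_mu[of w ws] snoc.prems by auto
  then have "arrow_count [foldl graph_mu w ws] \<le> arrow_count (w # ws)"
    by (auto simp: arrow_count_def Suc_le_eq)
  moreover have "arrow_count [z, foldl graph_mu w ws, u]
      = arrow_count [z] + arrow_count [foldl graph_mu w ws] + arrow_count [u]"
    by (simp add: arrow_count_def)
  ultimately have "arrow_count [z, foldl graph_mu w ws, u] \<le> 1"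
    using count snoc.prems(4) by linarith
  then have "graph_mu (graph_mu z (foldl graph_mu w ws)) u = graph_mu z (graph_mu (foldl graph_mu w ws) u)"
    using mu_assoc fold_w snoc.prems by auto
  then show ?case using IH by simp
qed

lemma mu_n_Cons:
  assumes "ws \<noteq> []" "in_graph w" "\<forall>u\<in>set ws. in_graph u" "arrow_count (w # ws) \<le> 1"
  shows "graph_mu_n (w # ws) = graph_mu w (graph_mu_n ws)"
  using assms foldl_mu_Cons[of w "hd ws" "tl ws"] by (cases ws) (simp_all add: mu_n_def)

lemma in_graph_mu_n:
  assumes "ws \<noteq> []" "\<forall>u\<in>set ws. in_graph u" "arrow_count ws \<le> 1"
  shows "in_graph (graph_mu_n ws) \<and> (isl (graph_mu_n ws) \<longleftrightarrow> arrow_count ws = 0)"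
  using assms in_graph_foldl_mu[of "hd ws" "tl ws"] by (cases ws) (simp_all add: mu_n_def)

end

lemma ex1_nat_shift:
  assumes "\<not> P 0"
  shows "(\<exists>!i. P i) \<longleftrightarrow> (\<exists>!i. P (Suc i))"
proof
  assume "\<exists>!i. P i"
  then obtain i where "P i" and uniq: "\<And>j. P j \<Longrightarrow> j = i" by blast
  from assms \<open>P i\<close> obtain i' where "i = Suc i'" by (cases i) auto
  show "\<exists>!i. P (Suc i)"
  proof (rule ex1I[of _ i'])
    show "P (Suc i')" using \<open>P i\<close> \<open>i = Suc i'\<close> by simp
    fix j assume "P (Suc j)"
    then show "j = i'" using uniq[of "Suc j"] \<open>i = Suc i'\<close> by simp
  qed
next
  assume "\<exists>!i. P (Suc i)"
  then obtain i where "P (Suc i)" and uniq: "\<And>j. P (Suc j) \<Longrightarrow> j = i" by blast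
  show "\<exists>!i. P i"
  proof (rule ex1I[of _ "Suc i"])
    fix j assume "P j"
    with assms obtain j' where "j = Suc j'" by (cases j) auto
    then show "j = Suc i" using uniq[of j'] \<open>P j\<close> by simp
  qed (fact \<open>P (Suc i)\<close>)
qed

lemma cube_verts_Suc: "\<epsilon> \<in> cube_verts (Suc m) \<longleftrightarrow> (\<exists>b \<epsilon>'. length \<epsilon>' = m \<and> \<epsilon> = b # \<epsilon>')"
  unfolding cube_verts_def by (cases \<epsilon>) auto

lemma cube_arrows_0: "cube_arrows 0 = {}"
  by (auto simp: cube_arrows_def)

lemma None_map_Some_in_cube_arrows:
  assumes "length \<epsilon> = m"
  shows "None # map Some \<epsilon> \<in> cube_arrows (Suc m)"
  unfolding cube_arrows_def
proof (intro CollectI conjI ex1I[of _ 0])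
  fix i assume "i < Suc m \<and> (None # map Some \<epsilon>) ! i = None"
  then show "i = 0" using assms by (cases i) auto
qed (use assms in auto)

lemma Some_Cons_in_cube_arrows_iff: "Some b # x \<in> cube_arrows (Suc m) \<longleftrightarrow> x \<in> cube_arrows m"
  using ex1_nat_shift[of "\<lambda>i. i < Suc m \<and> (Some b # x) ! i = None"] by (simp add: cube_arrows_def)

lemma cube_arrows_Suc:
  assumes "x \<in> cube_arrows (Suc m)"
  obtains (None) \<epsilon> where "length \<epsilon> = m" "x = None # map Some \<epsilon>"
    | (Some) b x' where "x' \<in> cube_arrows m" "x = Some b # x'"
proof -
  obtain c x' where x: "x = c # x'" and len: "length x' = m"
    using assms unfolding cube_arrows_def by (cases x) auto
  show thesis
  proof (cases c)
    case None
    from assms obtain i where "i < Suc m \<and> x ! i = None"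
      and uniq: "\<And>j. j < Suc m \<Longrightarrow> x ! j = None \<Longrightarrow> j = i" unfolding cube_arrows_def by blast
    then have "i = 0" using uniq[of 0] x None by simp
    have "\<forall>j<m. x' ! j \<noteq> None"
    proof (intro allI impI notI)
      fix j assume "j < m" "x' ! j = None"
      then show False using uniq[of "Suc j"] x \<open>i = 0\<close> by simp
    qed
    then have "x' = map Some (map the x')" by (intro nth_equalityI) (auto simp: len)
    then show thesis using that(1)[of "map the x'"] None x len by simp
  next
    case (Some b)
    then show thesis using that(2) assms x Some_Cons_in_cube_arrows_iff by blast
  qed
qed

context multiplicative_graph
begin

abbreviation endpoint :: "bool \<Rightarrow> 'a \<Rightarrow> 'v" where
  "endpoint b a \<equiv> if b then t a else s a"

abbreviation vertex_factors :: "bool list \<Rightarrow> 'a list \<Rightarrow> ('v + 'a) list" where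
  "vertex_factors \<epsilon> as \<equiv> map2 (\<lambda>b a. Inl (endpoint b a)) \<epsilon> as"

abbreviation arrow_factors :: "bool option list \<Rightarrow> 'a list \<Rightarrow> ('v + 'a) list" where
  "arrow_factors x as \<equiv>
     map2 (\<lambda>oc a. case oc of None \<Rightarrow> Inr a | Some b \<Rightarrow> Inl (endpoint b a)) x as"

abbreviation "cube \<equiv> prod_cube s t mv ml mr"
abbreviation "cube_vertex as \<equiv> fst (cube as)"
abbreviation "cube_arrow as \<equiv> snd (cube as)"

lemma endpoint_in: "a \<in> A \<Longrightarrow> endpoint b a \<in> V"
  using source_in target_in by auto

lemma vertex_factors_in_graph:
  assumes "set as \<subseteq> A"
  shows "(\<forall>u\<in>set (vertex_factors \<epsilon> as). in_graph u) \<and> arrow_count (vertex_factors \<epsilon> as) = 0"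
  using assms endpoint_in
  by (auto simp: arrow_count_def graph_elem_def filter_empty_conv dest!: set_zip_rightD)

lemma arrow_factors_map_Some: "arrow_factors (map Some \<epsilon>) as = vertex_factors \<epsilon> as"
proof (induction \<epsilon> arbitrary: as)
  case (Cons b \<epsilon>)
  then show ?case by (cases as) auto
qed simp

lemma arrow_factors_in_graph:
  assumes "set as \<subseteq> A" "x \<in> cube_arrows (length as)"
  shows "(\<forall>u\<in>set (arrow_factors x as). in_graph u) \<and> arrow_count (arrow_factors x as) = 1"
  using assms
proof (induction as arbitrary: x)
  case Nil
  then show ?case by (simp add: cube_arrows_0)
next
  case (Cons a as)
  from Cons.prems(2) have "x \<in> cube_arrows (Suc (length as))" by simp
  then show ?case
  proof (cases rule: cube_arrows_Suc)
    case (None \<epsilon>)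
    then show ?thesis using vertex_factors_in_graph[of as \<epsilon>] Cons.prems
      by (simp add: arrow_factors_map_Some arrow_count_def graph_elem_def)
  next
    case (Some b x')
    then show ?thesis using Cons.IH[of x'] Cons.prems endpoint_in
      by (auto simp: arrow_count_def graph_elem_def)
  qed
qed

lemma mu_n_vertex_factors:
  assumes "set as \<subseteq> A" "as \<noteq> []" "length \<epsilon> = length as"
  shows "graph_mu_n (vertex_factors \<epsilon> as) = Inl (cube_vertex as \<epsilon>) \<and> cube_vertex as \<epsilon> \<in> V"
proof -
  have "vertex_factors \<epsilon> as \<noteq> []" using assms(2,3) by (cases \<epsilon>; cases as) auto
  then have "in_graph (graph_mu_n (vertex_factors \<epsilon> as)) \<and> isl (graph_mu_n (vertex_factors \<epsilon> as))"
    using in_graph_mu_n vertex_factors_in_graph[OF assms(1)] by simp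
  moreover have "cube_vertex as \<epsilon> = projl (graph_mu_n (vertex_factors \<epsilon> as))"
    using assms(3) by (simp add: prod_cube_def cube_verts_def)
  ultimately show ?thesis by (cases "graph_mu_n (vertex_factors \<epsilon> as)") (auto simp: graph_elem_def)
qed

lemma mu_n_arrow_factors:
  assumes "set as \<subseteq> A" "x \<in> cube_arrows (length as)"
  shows "graph_mu_n (arrow_factors x as) = Inr (cube_arrow as x) \<and> cube_arrow as x \<in> A"
proof -
  have factors: "(\<forall>u\<in>set (arrow_factors x as). in_graph u) \<and> arrow_count (arrow_factors x as) = 1"
    using arrow_factors_in_graph[OF assms] .
  then have "arrow_factors x as \<noteq> []" by (auto simp: arrow_count_def)
  then have "in_graph (graph_mu_n (arrow_factors x as)) \<and> \<not> isl (graph_mu_n (arrow_factors x as))"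
    using in_graph_mu_n factors by simp
  moreover have "cube_arrow as x = projr (graph_mu_n (arrow_factors x as))"
    using assms(2) by (simp add: prod_cube_def)
  ultimately show ?thesis by (cases "graph_mu_n (arrow_factors x as)") (auto simp: graph_elem_def)
qed

lemma cube_vertex_single: "cube_vertex [a] [b] = endpoint b a"
  by (simp add: prod_cube_def cube_verts_def mu_n_def)

lemma cube_arrow_single: "cube_arrow [a] [None] = a"
  using None_map_Some_in_cube_arrows[of "[]" 0] by (simp add: prod_cube_def mu_n_def)

lemma cube_vertex_Cons:
  assumes "a \<in> A" "set as \<subseteq> A" "as \<noteq> []" "length \<epsilon> = length as"
  shows "cube_vertex (a # as) (b # \<epsilon>) = mv (endpoint b a) (cube_vertex as \<epsilon>)"
proof -
  have "vertex_factors \<epsilon> as \<noteq> []" using assms(3,4) by (cases \<epsilon>; cases as) auto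
  then have "graph_mu_n (vertex_factors (b # \<epsilon>) (a # as))
      = graph_mu (Inl (endpoint b a)) (graph_mu_n (vertex_factors \<epsilon> as))"
    using mu_n_Cons vertex_factors_in_graph[OF assms(2)] endpoint_in[OF assms(1)]
    by (simp add: graph_elem_def arrow_count_def)
  also have "\<dots> = Inl (mv (endpoint b a) (cube_vertex as \<epsilon>))"
    using mu_n_vertex_factors[OF assms(2-4)] by simp
  finally show ?thesis using assms(4) by (simp add: prod_cube_def cube_verts_def)
qed

lemma cube_arrow_None_Cons:
  assumes "a \<in> A" "set as \<subseteq> A" "as \<noteq> []" "length \<epsilon> = length as"
  shows "cube_arrow (a # as) (None # map Some \<epsilon>) = mr a (cube_vertex as \<epsilon>)"
proof -
  have "vertex_factors \<epsilon> as \<noteq> []" using assms(3,4) by (cases \<epsilon>; cases as) auto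
  then have "graph_mu_n (arrow_factors (None # map Some \<epsilon>) (a # as))
      = graph_mu (Inr a) (graph_mu_n (vertex_factors \<epsilon> as))"
    using mu_n_Cons vertex_factors_in_graph[OF assms(2)] assms(1)
    by (simp add: graph_elem_def arrow_count_def arrow_factors_map_Some)
  also have "\<dots> = Inr (mr a (cube_vertex as \<epsilon>))"
    using mu_n_vertex_factors[OF assms(2-4)] by simp
  finally show ?thesis
    using None_map_Some_in_cube_arrows[OF assms(4)] unfolding prod_cube_def by simp
qed

lemma cube_arrow_Some_Cons:
  assumes "a \<in> A" "set as \<subseteq> A" "x \<in> cube_arrows (length as)"
  shows "cube_arrow (a # as) (Some b # x) = ml (endpoint b a) (cube_arrow as x)"
proof -
  have factors: "(\<forall>u\<in>set (arrow_factors x as). in_graph u) \<and> arrow_count (arrow_factors x as) = 1"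
    using arrow_factors_in_graph[OF assms(2,3)] .
  then have "arrow_factors x as \<noteq> []" by (auto simp: arrow_count_def)
  then have "graph_mu_n (arrow_factors (Some b # x) (a # as))
      = graph_mu (Inl (endpoint b a)) (graph_mu_n (arrow_factors x as))"
    using mu_n_Cons factors endpoint_in[OF assms(1)] by (simp add: graph_elem_def arrow_count_def)
  also have "\<dots> = Inr (ml (endpoint b a) (cube_arrow as x))"
    using mu_n_arrow_factors[OF assms(2,3)] by simp
  finally show ?thesis
    using assms(3) Some_Cons_in_cube_arrows_iff unfolding prod_cube_def by simp
qed

lemma prod_cube_eqI:
  assumes "length as = length bs"
    and "\<And>\<epsilon>. \<epsilon> \<in> cube_verts (length as) \<Longrightarrow> cube_vertex as \<epsilon> = cube_vertex bs \<epsilon>"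
    and "\<And>x. x \<in> cube_arrows (length as) \<Longrightarrow> cube_arrow as x = cube_arrow bs x"
  shows "cube as = cube bs"
  using assms unfolding prod_cube_def by (auto simp: fun_eq_iff)

lemma prod_cube_Cons_cong:
  assumes "a \<in> A" "set as \<subseteq> A" "set bs \<subseteq> A" "as \<noteq> []" "length as = length bs"
    and "cube as = cube bs"
  shows "cube (a # as) = cube (a # bs)"
proof (rule prod_cube_eqI)
  have "bs \<noteq> []" using assms(4,5) by auto
  note Cons_rules = cube_vertex_Cons[OF assms(1,2,4)] cube_vertex_Cons[OF assms(1,3) \<open>bs \<noteq> []\<close>]
    cube_arrow_None_Cons[OF assms(1,2,4)] cube_arrow_None_Cons[OF assms(1,3) \<open>bs \<noteq> []\<close>]
    cube_arrow_Some_Cons[OF assms(1,2)] cube_arrow_Some_Cons[OF assms(1,3)]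
  fix \<epsilon> assume "\<epsilon> \<in> cube_verts (length (a # as))"
  then show "cube_vertex (a # as) \<epsilon> = cube_vertex (a # bs) \<epsilon>"
    using Cons_rules assms(5,6) by (auto simp: cube_verts_Suc)
next
  have "bs \<noteq> []" using assms(4,5) by auto
  fix x assume "x \<in> cube_arrows (length (a # as))"
  then have "x \<in> cube_arrows (Suc (length as))" by simp
  then show "cube_arrow (a # as) x = cube_arrow (a # bs) x"
  proof (cases rule: cube_arrows_Suc)
    case (None \<epsilon>)
    then show ?thesis using cube_arrow_None_Cons[OF assms(1,2,4)]
      cube_arrow_None_Cons[OF assms(1,3) \<open>bs \<noteq> []\<close>] assms(5,6) by simp
  next
    case (Some b x')
    then show ?thesis
      using cube_arrow_Some_Cons[OF assms(1,2)] cube_arrow_Some_Cons[OF assms(1,3)] assms(5,6) by simp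
  qed
qed (use assms(5) in simp)

text \<open>Unfolding \<open>mu_n\<close>, both sides fold the same tail onto the product of their first two
  factors, and these products agree by the associativity laws.\<close>
lemma prod_cube_ml_swap:
  assumes "a \<in> A" "b \<in> A" "h \<in> V" "set as \<subseteq> A"
  shows "cube (a # ml h b # as) = cube (mr a h # b # as)"
proof (rule prod_cube_eqI)
  note simps = prod_cube_def cube_verts_def mu_n_def source_ml target_ml source_mr target_mr
    mv_assoc source_in target_in assms
  fix \<epsilon> assume "\<epsilon> \<in> cube_verts (length (a # ml h b # as))"
  then have "length \<epsilon> = Suc (Suc (length as))" by (simp add: cube_verts_def)
  then obtain b1 b2 \<epsilon>' where "\<epsilon> = b1 # b2 # \<epsilon>'" "length \<epsilon>' = length as"
    by (metis length_Suc_conv)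
  then show "cube_vertex (a # ml h b # as) \<epsilon> = cube_vertex (mr a h # b # as) \<epsilon>"
    by (cases b1; cases b2) (simp_all add: simps)
next
  note simps = prod_cube_def mu_n_def source_ml target_ml source_mr target_mr
    mv_assoc mr_mr ml_mv source_in target_in assms
  fix x assume x: "x \<in> cube_arrows (length (a # ml h b # as))"
  then have x': "x \<in> cube_arrows (length (mr a h # b # as))" by simp
  from x have "x \<in> cube_arrows (Suc (Suc (length as)))" by simp
  then show "cube_arrow (a # ml h b # as) x = cube_arrow (mr a h # b # as) x"
  proof (cases rule: cube_arrows_Suc)
    case (None \<epsilon>)
    then obtain b2 \<epsilon>' where "x = None # Some b2 # map Some \<epsilon>'" by (cases \<epsilon>) auto
    then show ?thesis using x x' by (cases b2) (simp_all add: simps)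
  next
    case (Some b1 y)
    from Some(1) show ?thesis
    proof (cases rule: cube_arrows_Suc)
      case (None \<epsilon>')
      then show ?thesis using x x' Some(2) by (cases b1) (simp_all add: simps)
    next
      case (Some b2 y')
      then show ?thesis using x x' \<open>x = Some b1 # y\<close> by (cases b1; cases b2) (simp_all add: simps)
    qed
  qed
qed simp

end

locale group_like_graph = multiplicative_graph V A s t mv ml mr
  for V :: "'v set" and A :: "'a set" and s t :: "'a \<Rightarrow> 'v"
    and mv :: "'v \<Rightarrow> 'v \<Rightarrow> 'v" and ml :: "'v \<Rightarrow> 'a \<Rightarrow> 'a" and mr :: "'a \<Rightarrow> 'v \<Rightarrow> 'a" +
  fixes e :: 'v
  assumes group: "group \<lparr>carrier = V, monoid.mult = mv, one = e\<rparr>"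
    and ml_unit: "a \<in> A \<Longrightarrow> ml e a = a"
    and mr_unit: "a \<in> A \<Longrightarrow> mr a e = a"
begin

definition inv_v :: "'v \<Rightarrow> 'v" where
  "inv_v g = inv\<^bsub>\<lparr>carrier = V, monoid.mult = mv, one = e\<rparr>\<^esub> g"

lemma unit_in: "e \<in> V"
  using monoid.one_closed[OF group.is_monoid[OF group]] by simp

lemma mv_unit_left: "g \<in> V \<Longrightarrow> mv e g = g"
  using monoid.l_one[OF group.is_monoid[OF group], of g] by simp

lemma mv_unit_right: "g \<in> V \<Longrightarrow> mv g e = g"
  using monoid.r_one[OF group.is_monoid[OF group], of g] by simp

lemma inv_v_in: "g \<in> V \<Longrightarrow> inv_v g \<in> V"
  using group.inv_closed[OF group, of g] by (simp add: inv_v_def)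

lemma inv_v_left: "g \<in> V \<Longrightarrow> mv (inv_v g) g = e"
  using group.l_inv[OF group, of g] by (simp add: inv_v_def)

lemma inv_v_right: "g \<in> V \<Longrightarrow> mv g (inv_v g) = e"
  using group.r_inv[OF group, of g] by (simp add: inv_v_def)

lemma mv_left_cancel: "g \<in> V \<Longrightarrow> x \<in> V \<Longrightarrow> y \<in> V \<Longrightarrow> mv g x = mv g y \<Longrightarrow> x = y"
  by (metis mv_assoc inv_v_in inv_v_left mv_unit_left)

lemma ml_left_cancel: "g \<in> V \<Longrightarrow> x \<in> A \<Longrightarrow> y \<in> A \<Longrightarrow> ml g x = ml g y \<Longrightarrow> x = y"
  by (metis ml_mv inv_v_in inv_v_left ml_unit)

abbreviation based_arrows :: "'a set" where
  "based_arrows \<equiv> {x \<in> A. s x = e}"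

lemma based_arrow_decomp:
  assumes "a \<in> A"
  shows "ml (inv_v (s a)) a \<in> based_arrows \<and> ml (s a) (ml (inv_v (s a)) a) = a"
  using assms source_in[of a] inv_v_in[of "s a"] ml_closed source_ml inv_v_left inv_v_right
    ml_mv[of "s a" "inv_v (s a)" a] ml_unit by auto

lemma source_ml_based: "g \<in> V \<Longrightarrow> x \<in> based_arrows \<Longrightarrow> s (ml g x) = g"
  using source_ml mv_unit_right by simp

lemma prod_cube_Cons_cancel:
  assumes "a \<in> A" "set as \<subseteq> A" "set bs \<subseteq> A" "as \<noteq> []" "length as = length bs"
    and "cube (a # as) = cube (a # bs)"
  shows "cube as = cube bs"
proof (rule prod_cube_eqI)
  have "bs \<noteq> []" using assms(4,5) by auto
  fix \<epsilon> assume "\<epsilon> \<in> cube_verts (length as)"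
  then have len: "length \<epsilon> = length as" by (simp add: cube_verts_def)
  have "cube_vertex (a # as) (False # \<epsilon>) = cube_vertex (a # bs) (False # \<epsilon>)" using assms(6) by simp
  then have "mv (s a) (cube_vertex as \<epsilon>) = mv (s a) (cube_vertex bs \<epsilon>)"
    using cube_vertex_Cons[OF assms(1,2,4) len] cube_vertex_Cons[OF assms(1,3) \<open>bs \<noteq> []\<close>] len assms(5)
    by simp
  then show "cube_vertex as \<epsilon> = cube_vertex bs \<epsilon>"
    using mv_left_cancel source_in[OF assms(1)] mu_n_vertex_factors[OF assms(2,4) len]
      mu_n_vertex_factors[OF assms(3) \<open>bs \<noteq> []\<close>] len assms(5) by simp
next
  fix x assume x: "x \<in> cube_arrows (length as)"
  have "cube_arrow (a # as) (Some False # x) = cube_arrow (a # bs) (Some False # x)"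
    using assms(6) by simp
  then have "ml (s a) (cube_arrow as x) = ml (s a) (cube_arrow bs x)"
    using cube_arrow_Some_Cons[OF assms(1,2) x] cube_arrow_Some_Cons[OF assms(1,3)] x assms(5) by simp
  then show "cube_arrow as x = cube_arrow bs x"
    using ml_left_cancel source_in[OF assms(1)] mu_n_arrow_factors[OF assms(2) x]
      mu_n_arrow_factors[OF assms(3)] x assms(5) by simp
qed (use assms(5) in simp)

lemma cube_vertex_based_origin:
  assumes "set xs \<subseteq> based_arrows" "xs \<noteq> []"
  shows "cube_vertex xs (replicate (length xs) False) = e"
  using assms
proof (induction xs)
  case (Cons x xs)
  show ?case
  proof (cases "xs = []")
    case True
    then show ?thesis using Cons.prems cube_vertex_single by simp
  next
    case False
    then have "cube_vertex (x # xs) (False # replicate (length xs) False)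
        = mv (s x) (cube_vertex xs (replicate (length xs) False))"
      using cube_vertex_Cons[of x xs "replicate (length xs) False" False] Cons.prems by auto
    then show ?thesis using Cons.IH Cons.prems False mv_unit_left unit_in by simp
  qed
qed simp

lemma cube_arrow_based_first_edge:
  assumes "g \<in> V" "x \<in> based_arrows" "set xs \<subseteq> based_arrows"
  shows "cube_arrow (ml g x # xs) (None # replicate (length xs) (Some False)) = ml g x"
proof (cases "xs = []")
  case True
  then show ?thesis using cube_arrow_single by simp
next
  case False
  have "set xs \<subseteq> A" using assms(3) by auto
  then have "cube_arrow (ml g x # xs) (None # map Some (replicate (length xs) False))
      = mr (ml g x) (cube_vertex xs (replicate (length xs) False))"
    using cube_arrow_None_Cons[OF ml_closed[OF assms(1)] _ False, of x "replicate (length xs) False"]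
      assms(2) by simp
  then show ?thesis using cube_vertex_based_origin[OF assms(3) False] mr_unit ml_closed assms(1,2)
    by (simp add: map_replicate)
qed

abbreviation normal_cube :: "'v \<Rightarrow> 'a list \<Rightarrow> (bool list \<Rightarrow> 'v) \<times> (bool option list \<Rightarrow> 'a)" where
  "normal_cube g xs \<equiv> cube (ml g (hd xs) # tl xs)"

lemma normal_cube_inject:
  assumes "set xs \<subseteq> based_arrows" "set ys \<subseteq> based_arrows" "length xs = length ys" "xs \<noteq> []"
    and "g \<in> V" "g' \<in> V" "normal_cube g xs = normal_cube g' ys"
  shows "g = g' \<and> xs = ys"
  using assms
proof (induction xs arbitrary: ys g g')
  case (Cons x xs)
  obtain y ys' where ys: "ys = y # ys'" using Cons.prems(3) by (cases ys) auto
  have x: "x \<in> based_arrows" "set xs \<subseteq> based_arrows" using Cons.prems(1) by auto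
  have y: "y \<in> based_arrows" "set ys' \<subseteq> based_arrows" using Cons.prems(2) ys by auto
  have len: "length xs = length ys'" using Cons.prems(3) ys by simp
  have eq: "cube (ml g x # xs) = cube (ml g' y # ys')" using Cons.prems(7) ys by simp
  then have "ml g x = ml g' y"
    using cube_arrow_based_first_edge[OF Cons.prems(5) x] cube_arrow_based_first_edge[OF Cons.prems(6) y]
      len by metis
  moreover from this have "g = g'"
    using source_ml_based[OF Cons.prems(5) x(1)] source_ml_based[OF Cons.prems(6) y(1)] by simp
  ultimately have "x = y" using ml_left_cancel[OF Cons.prems(5)] x(1) y(1) by simp
  have "xs = ys'"
  proof (cases "xs = []")
    case True
    then show ?thesis using len by simp
  next
    case False
    have "cube xs = cube ys'"
      using prod_cube_Cons_cancel[OF ml_closed[OF Cons.prems(5)] _ _ False len] x y eq \<open>g = g'\<close> \<open>x = y\<close>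
      by auto
    moreover have "ml e (hd xs) # tl xs = xs" "ml e (hd ys') # tl ys' = ys'"
      using False len x y ml_unit by (cases xs; cases ys'; auto)+
    ultimately show ?thesis using Cons.IH[OF x(2) y(2) len False unit_in unit_in] by simp
  qed
  then show ?case using \<open>g = g'\<close> \<open>x = y\<close> ys by simp
qed simp

lemma normal_cube_exists:
  assumes "set as \<subseteq> A" "as \<noteq> []"
  shows "\<exists>g\<in>V. \<exists>xs. length xs = length as \<and> set xs \<subseteq> based_arrows \<and> cube as = normal_cube g xs"
  using assms
proof (induction as)
  case (Cons a as)
  have a: "a \<in> A" "set as \<subseteq> A" using Cons.prems by auto
  show ?case
  proof (cases "as = []")
    case True
    show ?thesis using based_arrow_decomp[OF a(1)] source_in[OF a(1)] True
      by (intro bexI[of _ "s a"] exI[of _ "[ml (inv_v (s a)) a]"]) auto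
  next
    case False
    then obtain h xs where "h \<in> V" "length xs = length as" "set xs \<subseteq> based_arrows"
      "cube as = normal_cube h xs"
      using Cons.IH[OF a(2)] by blast
    then obtain y ys where h: "h \<in> V" "y \<in> based_arrows" "set ys \<subseteq> based_arrows"
      "length ys + 1 = length as" "cube as = cube (ml h y # ys)"
      using False by (cases xs) auto
    have "set (ml h y # ys) \<subseteq> A" using h ml_closed by auto
    then have "cube (a # as) = cube (a # ml h y # ys)"
      using prod_cube_Cons_cong[OF a(1,2) _ False] h(4,5) by simp
    also have "\<dots> = cube (mr a h # y # ys)" using prod_cube_ml_swap[OF a(1) _ h(1)] h by auto
    finally have "cube (a # as) = cube (mr a h # y # ys)" .
    then show ?thesis using based_arrow_decomp[OF mr_closed[OF a(1) h(1)]] h source_in mr_closed a(1)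
      by (intro bexI[of _ "s (mr a h)"] exI[of _ "ml (inv_v (s (mr a h))) (mr a h) # y # ys"]) auto
  qed
qed simp

lemma inj_on_normal_cube:
  assumes "n \<ge> 1"
  shows "inj_on (\<lambda>(g, xs). normal_cube g xs) (V \<times> {xs. length xs = n \<and> set xs \<subseteq> based_arrows})"
proof (rule inj_onI)
  fix p q
  assume "p \<in> V \<times> {xs. length xs = n \<and> set xs \<subseteq> based_arrows}"
    and "q \<in> V \<times> {xs. length xs = n \<and> set xs \<subseteq> based_arrows}"
    and "(\<lambda>(g, xs). normal_cube g xs) p = (\<lambda>(g, xs). normal_cube g xs) q"
  moreover obtain g xs g' ys where "p = (g, xs)" "q = (g', ys)" by fastforce
  ultimately show "p = q" using normal_cube_inject[of xs ys g g'] assms by (auto simp: Suc_le_eq)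
qed

lemma normal_cube_image:
  assumes "n \<ge> 1"
  shows "(\<lambda>(g, xs). normal_cube g xs) ` (V \<times> {xs. length xs = n \<and> set xs \<subseteq> based_arrows})
    = {cube as | as. length as = n \<and> set as \<subseteq> A}"
proof (intro equalityI subsetI)
  fix c assume "c \<in> (\<lambda>(g, xs). normal_cube g xs) ` (V \<times> {xs. length xs = n \<and> set xs \<subseteq> based_arrows})"
  then obtain g xs where "g \<in> V" "length xs = n" "set xs \<subseteq> based_arrows" "c = normal_cube g xs"
    by auto
  moreover from this obtain x xs' where "xs = x # xs'" using assms by (cases xs) auto
  ultimately have "g \<in> V" "x \<in> based_arrows" "length (x # xs') = n" "set xs' \<subseteq> based_arrows"
      "c = cube (ml g x # xs')"
    by auto
  then show "c \<in> {cube as | as. length as = n \<and> set as \<subseteq> A}"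
    using ml_closed by (intro CollectI exI[of _ "ml g x # xs'"]) auto
next
  fix c assume "c \<in> {cube as | as. length as = n \<and> set as \<subseteq> A}"
  then obtain as where "length as = n" "set as \<subseteq> A" "c = cube as" by blast
  then show "c \<in> (\<lambda>(g, xs). normal_cube g xs) ` (V \<times> {xs. length xs = n \<and> set xs \<subseteq> based_arrows})"
    using normal_cube_exists[of as] assms by force
qed

end

theorem mainTheorem5:
  fixes V :: "'v set" and A :: "'a set" and s t :: "'a \<Rightarrow> 'v"
    and mv :: "'v \<Rightarrow> 'v \<Rightarrow> 'v" and ml :: "'v \<Rightarrow> 'a \<Rightarrow> 'a" and mr :: "'a \<Rightarrow> 'v \<Rightarrow> 'a"
    and e :: 'v and n :: nat
  assumes "group_like V A s t mv ml mr e"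
    and left_unit: "\<forall>a\<in>A. ml e a = a"
    and right_unit: "\<forall>a\<in>A. mr a e = a"
    and "n \<ge> 1"
  shows "bij_betw
           (\<lambda>(g, xs). prod_cube s t mv ml mr (ml g (hd xs) # tl xs))
           (V \<times> {xs. length xs = n \<and> set xs \<subseteq> {x \<in> A. s x = e}})
           {prod_cube s t mv ml mr as | as. length as = n \<and> set as \<subseteq> A}"
proof -
  interpret group_like_graph V A s t mv ml mr e
    using assms unfolding group_like_def
    by (auto intro!: group_like_graph.intro simp: multiplicative_graph_def group_like_graph_axioms_def)
  show ?thesis
    using inj_on_normal_cube[OF \<open>n \<ge> 1\<close>] normal_cube_image[OF \<open>n \<ge> 1\<close>] by (rule bij_betw_imageI)
qed

end
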